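(* Let $\mathcal{G}$ be an additive arithmetical semigroup satisfying Axiom $A^{\#}$ (constants $c_{\mathcal{G}}>0$, $q>1$, $0\le\eta_0<1$) with $Z_{\mathcal{G}}(-q^{-1})\ne0$. Then there is a constant $0\le\eta<1$ such that $$\sum_{\partial(g)=n}\mu(g)=O(q^{\eta n})\qquad(n\ge0).$$
   Context: An additive arithmetical semigroup is a commutative monoid $\mathcal{G}$ (written additively, identity $e_{\mathcal{G}}$) freely generated by a countable set $\mathcal{P}$ of primes, with an additive degree map $\partial\colon\mathcal{G}\to\mathbb{Z}_{\ge0}$, $\partial(e_{\mathcal{G}})=0$, $\partial(P)>0$ for primes, finitely many elements of each degree. Axiom $A^{\#}$: $\#\{g:\partial(g)=n\}=c_{\mathcal{G}}q^n+O(q^{\eta_0 n})$. $Z_{\mathcal{G}}(z)=\prod_{P\in\mathcal{P}}(1-z^{\partial(P)})^{-1}$, meromorphically continued. $\mu$ is the Möbius function: $\mu(e_{\mathcal{G}})=1$, $\mu(P_1+\dots+P_k)=(-1)^k$ for distinct primes, $\mu(g)=0$ if $2P\mid g$ for some prime $P$ (where $h\mid g$ means $g=h+r$ for some $r\in\mathcal{G}$). *)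

theory Defs
  imports "HOL-Analysis.Analysis" "HOL-Library.Multiset"
begin

text \<open>An additive arithmetical semigroup: a commutative monoid (carrier = the type 'a)
  freely generated by the set P of primes, with an additive degree map.\<close>
definition arith_semigroup :: "'a::comm_monoid_add set \<Rightarrow> ('a \<Rightarrow> nat) \<Rightarrow> bool" where
  "arith_semigroup P deg \<longleftrightarrow>
     countable P \<and>
     (\<forall>g. \<exists>!M. set_mset M \<subseteq> P \<and> sum_mset M = g) \<and>
     deg 0 = 0 \<and>
     (\<forall>a b. deg (a + b) = deg a + deg b) \<and>
     (\<forall>p\<in>P. deg p > 0) \<and>
     (\<forall>n. finite {g. deg g = n})"

definition Gcount :: "('a \<Rightarrow> nat) \<Rightarrow> nat \<Rightarrow> nat" where
  "Gcount deg n = card {g. deg g = n}"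

definition axiom_A_sharp :: "('a \<Rightarrow> nat) \<Rightarrow> real \<Rightarrow> real \<Rightarrow> real \<Rightarrow> bool" where
  "axiom_A_sharp deg c q \<eta>0 \<longleftrightarrow>
     (\<exists>C. \<forall>n. \<bar>real (Gcount deg n) - c * q ^ n\<bar> \<le> C * q powr (\<eta>0 * real n))"

definition factorisation :: "'a::comm_monoid_add set \<Rightarrow> 'a \<Rightarrow> 'a multiset" where
  "factorisation P g = (THE M. set_mset M \<subseteq> P \<and> sum_mset M = g)"

definition moebius :: "'a::comm_monoid_add set \<Rightarrow> 'a \<Rightarrow> int" where
  "moebius P g = (if \<exists>p\<in>P. \<exists>r. g = p + p + r then 0
                  else (-1) ^ size (factorisation P g))"

end

theory Submission
  imports Defs "HOL-Complex_Analysis.Complex_Analysis"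
begin

text \<open>
  Let G(n) be the number of elements of degree n and Z(z) = sum G(n) z^n. Counting the
  prime factors of the elements of degree n gives n G(n) = sum_{k=1..n} Lambda(k) G(n - k),
  so Z = exp L for a power series L with nonnegative coefficients Lambda(n)/n; Moebius
  inversion over the divisors gives M Z = 1 for the generating function M of the Moebius
  sums. By Axiom A#, D(z) = (1 - qz) Z(z) is holomorphic on |z| < q^-\<eta>0. It has no zeros on
  the closed disc |z| <= 1/q: inside, D = (1 - qz) exp L; D(1/q) = c and D(-1/q) = 2 Z(-1/q);
  any other zero on the circle is ruled out by Mertens' inequality 3 + 4 cos t + cos 2t >= 0
  applied to Re L, as in the proof that the Riemann zeta function has no zeros on Re s = 1.
  Hence M = (1 - qz)/D converges on a disc of radius larger than 1/q, and its coefficients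
  are O(q^(\<eta> n)) for some \<eta> < 1.
\<close>

section \<open>Counting in the semigroup\<close>

lemma sum_mset_image_eq_sum_count:
  fixes f :: "'a \<Rightarrow> 'b::comm_semiring_1"
  assumes "finite A" and "set_mset M \<subseteq> A"
  shows "(\<Sum>x\<in>#M. f x) = (\<Sum>x\<in>A. of_nat (count M x) * f x)"
  using assms(2)
proof (induction M)
  case (add y M)
  have "(\<Sum>x\<in>A. of_nat (count (add_mset y M) x) * f x)
        = (\<Sum>x\<in>A. of_nat (count M x) * f x) + (\<Sum>x\<in>A. if x = y then f x else 0)"
    by (simp add: sum.distrib[symmetric] algebra_simps, intro sum.cong) (auto simp: algebra_simps)
  with add assms(1) show ?case
    by (simp add: sum.delta add.commute)
qed simp

lemma mset_set_set_mset_eq: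
  assumes "\<And>x. count M x \<le> 1"
  shows "mset_set (set_mset M) = M"
proof (rule multiset_eqI)
  fix x
  show "count (mset_set (set_mset M)) x = count M x"
    using assms[of x] by (cases "count M x") (auto simp: count_mset_set' not_in_iff)
qed

lemma sum_over_multiples:
  fixes f :: "nat \<Rightarrow> 'b::comm_monoid_add"
  assumes "d > 0"
  shows "(\<Sum>k | k \<in> {1..n} \<and> d dvd k. f k) = (\<Sum>j=1..n div d. f (j * d))"
  by (rule sum.reindex_bij_witness[of _ "\<lambda>j. j * d" "\<lambda>k. k div d"])
     (use assms in \<open>auto simp: less_eq_div_iff_mult_less_eq div_le_mono dest: dvd_imp_le\<close>)

lemma sum_Pow_minus_one_power_card:
  assumes "finite X"
  shows "(\<Sum>S\<in>Pow X. (-1) ^ card S :: 'a::comm_ring_1) = (if X = {} then 1 else 0)"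
  using prod_diff_conv_sum[OF assms, of "\<lambda>_. 1" "\<lambda>_. 1::'a"] assms
  by (auto simp: power_0_left card_eq_0_iff)

definition add_divisors :: "'a::comm_monoid_add \<Rightarrow> 'a set" where
  "add_divisors g = {h. \<exists>r. g = h + r}"

locale additive_arithmetical_semigroup =
  fixes P :: "'a::comm_monoid_add set" and deg :: "'a \<Rightarrow> nat"
  assumes arith_semigroup: "arith_semigroup P deg"
begin

abbreviation factors :: "'a \<Rightarrow> 'a multiset" where
  "factors \<equiv> factorisation P"

abbreviation G :: "nat \<Rightarrow> nat" where
  "G \<equiv> Gcount deg"

lemma ex1_factorisation: "\<exists>!M. set_mset M \<subseteq> P \<and> sum_mset M = g"
  using arith_semigroup unfolding arith_semigroup_def by blast

lemma set_factors_subset: "set_mset (factors g) \<subseteq> P"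
  and sum_mset_factors [simp]: "sum_mset (factors g) = g"
  using theI'[OF ex1_factorisation[of g]] unfolding factorisation_def by auto

lemma factors_sum_mset: "set_mset M \<subseteq> P \<Longrightarrow> factors (sum_mset M) = M"
  using ex1_factorisation[of "sum_mset M"] set_factors_subset sum_mset_factors by blast

lemma factors_add: "factors (g + h) = factors g + factors h"
  using factors_sum_mset[of "factors g + factors h"] set_factors_subset by simp

lemma factors_zero [simp]: "factors 0 = {#}"
  using factors_sum_mset[of "{#}"] by simp

lemma factors_prime: "p \<in> P \<Longrightarrow> factors p = {#p#}"
  using factors_sum_mset[of "{#p#}"] by simp

lemma deg_add: "deg (g + h) = deg g + deg h"
  and deg_zero [simp]: "deg 0 = 0"
  and deg_prime_pos: "p \<in> P \<Longrightarrow> deg p > 0"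
  and finite_deg_eq: "finite {g. deg g = n}"
  using arith_semigroup unfolding arith_semigroup_def by blast+

lemma finite_deg_le: "finite {g. deg g \<le> n}"
proof -
  have "{g. deg g \<le> n} = (\<Union>m\<le>n. {g. deg g = m})" by auto
  then show ?thesis using finite_deg_eq by simp
qed

lemma deg_sum_mset: "deg (sum_mset M) = (\<Sum>p\<in>#M. deg p)"
  by (induction M) (auto simp: deg_add)

lemma deg_eq_sum_factors: "deg g = (\<Sum>p\<in>#factors g. deg p)"
  using deg_sum_mset[of "factors g"] by simp

lemma inj_add_left: "inj ((+) (g::'a))"
proof (rule injI)
  fix h h' assume "g + h = g + h'"
  then have "factors g + factors h = factors g + factors h'"
    by (simp flip: factors_add)
  then show "h = h'"
    by (metis add_left_cancel sum_mset_factors)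
qed

lemma deg_eq_0_iff: "deg g = 0 \<longleftrightarrow> g = 0"
proof
  assume "deg g = 0"
  then have "\<forall>p\<in>#factors g. deg p = 0"
    using deg_eq_sum_factors[of g] by simp
  moreover have "deg p > 0" if "p \<in># factors g" for p
    using that set_factors_subset[of g] deg_prime_pos by blast
  ultimately have "factors g = {#}"
    by (metis multiset_nonemptyE not_less_zero)
  then show "g = 0" by (metis sum_mset_factors sum_mset.empty)
qed simp

lemma Gcount_0: "G 0 = 1"
  unfolding Gcount_def using deg_eq_0_iff by simp

lemma mem_add_divisors_iff: "h \<in> add_divisors g \<longleftrightarrow> factors h \<subseteq># factors g"
proof
  assume "factors h \<subseteq># factors g"
  then have "g = h + sum_mset (factors g - factors h)"
    using subset_mset.add_diff_inverse[of "factors h" "factors g"] sum_mset.union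
    by (metis sum_mset_factors)
  then show "h \<in> add_divisors g" unfolding add_divisors_def by blast
qed (auto simp: add_divisors_def factors_add)

lemma deg_le_of_mem_add_divisors: "h \<in> add_divisors g \<Longrightarrow> deg h \<le> deg g"
  by (auto simp: add_divisors_def deg_add)

lemma finite_add_divisors: "finite (add_divisors (g::'a))"
  by (rule finite_subset[OF _ finite_deg_le[of "deg g"]]) (auto dest: deg_le_of_mem_add_divisors)

lemma card_deg_multiples:
  assumes "deg h \<le> n"
  shows "card {g. deg g = n \<and> h \<in> add_divisors g} = G (n - deg h)"
proof -
  have "{g. deg g = n \<and> h \<in> add_divisors g} = (+) h ` {r. deg r = n - deg h}"
    using assms by (auto simp: add_divisors_def deg_add)
  then show ?thesis
    unfolding Gcount_def by (simp add: card_image[OF inj_on_subset[OF inj_add_left subset_UNIV]])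
qed

lemma sum_add_divisors_convolution:
  fixes f :: "'a \<Rightarrow> 'b::comm_semiring_1"
  shows "(\<Sum>g | deg g = n. \<Sum>h\<in>add_divisors g. f h)
         = (\<Sum>i\<le>n. (\<Sum>h | deg h = i. f h) * of_nat (G (n - i)))"
proof -
  have "(\<Sum>g | deg g = n. \<Sum>h\<in>add_divisors g. f h)
        = (\<Sum>g | deg g = n. \<Sum>h | h \<in> {h. deg h \<le> n} \<and> h \<in> add_divisors g. f h)"
    by (intro sum.cong refl arg_cong[where f = "sum f"]) (auto dest: deg_le_of_mem_add_divisors)
  also have "\<dots> = (\<Sum>h | deg h \<le> n. \<Sum>g | g \<in> {g. deg g = n} \<and> h \<in> add_divisors g. f h)"
    using finite_deg_eq finite_deg_le by (rule sum.swap_restrict)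
  also have "\<dots> = (\<Sum>h | deg h \<le> n. f h * of_nat (G (n - deg h)))"
    by (intro sum.cong refl) (simp add: card_deg_multiples mult.commute)
  also have "\<dots> = (\<Sum>i\<le>n. \<Sum>h | h \<in> {h. deg h \<le> n} \<and> deg h = i.
                          f h * of_nat (G (n - deg h)))"
    using finite_deg_le by (rule sum.group[symmetric]) auto
  also have "\<dots> = (\<Sum>i\<le>n. (\<Sum>h | deg h = i. f h) * of_nat (G (n - i)))"
  proof (intro sum.cong refl)
    fix i assume "i \<in> {..n}"
    then have "{h. h \<in> {h. deg h \<le> n} \<and> deg h = i} = {h. deg h = i}" by auto
    then show "(\<Sum>h | h \<in> {h. deg h \<le> n} \<and> deg h = i. f h * of_nat (G (n - deg h)))
               = (\<Sum>h | deg h = i. f h) * of_nat (G (n - i))"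
      unfolding sum_distrib_right by (rule sum.cong) simp
  qed
  finally show ?thesis .
qed

lemma deg_replicate_prime: "deg (sum_mset (replicate_mset j p)) = j * deg p"
  by (simp add: deg_sum_mset)

lemma count_factors_ge_iff:
  assumes "p \<in> P"
  shows "j \<le> count (factors g) p \<longleftrightarrow> sum_mset (replicate_mset j p) \<in> add_divisors g"
  using assms by (simp add: mem_add_divisors_iff factors_sum_mset count_le_replicate_mset_subset_eq)

lemma count_factors_mult_deg_le: "count (factors g) p * deg p \<le> deg g"
proof (cases "p \<in> P")
  case True
  then show ?thesis
    using count_factors_ge_iff[OF True, of "count (factors g) p" g]
    by (metis deg_le_of_mem_add_divisors deg_replicate_prime order_refl)
next
  case False
  then have "p \<notin># factors g" using set_factors_subset by blast
  then show ?thesis by (simp add: not_in_iff)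
qed

lemma deg_le_of_mem_factors:
  assumes "p \<in># factors g"
  shows "deg p \<le> deg g"
proof -
  have "p \<in> P" using assms set_factors_subset by blast
  with assms have "p \<in> add_divisors g"
    by (simp add: mem_add_divisors_iff factors_prime)
  then show ?thesis by (rule deg_le_of_mem_add_divisors)
qed

lemma sum_count_factors:
  assumes p: "p \<in> P"
  shows "(\<Sum>g | deg g = n. count (factors g) p) = (\<Sum>j=1..n div deg p. G (n - j * deg p))"
proof -
  have dp: "deg p > 0" using deg_prime_pos[OF p] .
  have "(\<Sum>g | deg g = n. count (factors g) p)
        = (\<Sum>g | deg g = n. \<Sum>j=1..n div deg p. of_bool (j \<le> count (factors g) p))"
  proof (intro sum.cong refl)
    fix g assume "g \<in> {g. deg g = n}"
    then have "count (factors g) p \<le> n div deg p"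
      using count_factors_mult_deg_le[of g p] dp by (simp add: less_eq_div_iff_mult_less_eq)
    then have "{1..n div deg p} \<inter> {j. j \<le> count (factors g) p} = {1..count (factors g) p}"
      by auto
    then show "count (factors g) p = (\<Sum>j=1..n div deg p. of_bool (j \<le> count (factors g) p))"
      by simp
  qed
  also have "\<dots> = (\<Sum>j=1..n div deg p. \<Sum>g | deg g = n. of_bool (j \<le> count (factors g) p))"
    by (rule sum.swap)
  also have "\<dots> = (\<Sum>j=1..n div deg p. G (n - j * deg p))"
  proof (intro sum.cong refl)
    fix j assume "j \<in> {1..n div deg p}"
    then have "j * deg p \<le> n"
      using dp by (simp add: less_eq_div_iff_mult_less_eq)
    then show "(\<Sum>g | deg g = n. of_bool (j \<le> count (factors g) p)) = G (n - j * deg p)"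
      using card_deg_multiples[of "sum_mset (replicate_mset j p)" n] finite_deg_eq
      by (simp add: count_factors_ge_iff[OF p] deg_replicate_prime Int_def)
  qed
  finally show ?thesis .
qed

definition Lambda :: "nat \<Rightarrow> nat" where
  "Lambda k = (\<Sum>p | p \<in> P \<and> deg p dvd k. deg p)"

lemma deg_times_Gcount_eq_sum_primes:
  "n * G n = (\<Sum>p | p \<in> P \<and> deg p \<le> n. deg p * (\<Sum>g | deg g = n. count (factors g) p))"
proof -
  define Pn where "Pn = {p \<in> P. deg p \<le> n}"
  have fin: "finite Pn"
    unfolding Pn_def by (rule finite_subset[OF _ finite_deg_le[of n]]) auto
  have "n * G n = (\<Sum>g | deg g = n. deg g)"
    unfolding Gcount_def by simp
  also have "\<dots> = (\<Sum>g | deg g = n. \<Sum>p\<in>Pn. count (factors g) p * deg p)"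
  proof (intro sum.cong refl)
    fix g assume g: "g \<in> {g. deg g = n}"
    have "set_mset (factors g) \<subseteq> Pn"
      using set_factors_subset[of g] deg_le_of_mem_factors[of _ g] g by (auto simp: Pn_def)
    then show "deg g = (\<Sum>p\<in>Pn. count (factors g) p * deg p)"
      using deg_eq_sum_factors[of g] sum_mset_image_eq_sum_count[OF fin, of "factors g" deg] by simp
  qed
  also have "\<dots> = (\<Sum>p\<in>Pn. deg p * (\<Sum>g | deg g = n. count (factors g) p))"
    by (subst sum.swap) (simp add: sum_distrib_left mult.commute)
  finally show ?thesis
    unfolding Pn_def by simp
qed

lemma deg_times_Gcount: "n * G n = (\<Sum>k=1..n. Lambda k * G (n - k))"
proof -
  define Pn where "Pn = {p \<in> P. deg p \<le> n}"
  have fin: "finite Pn"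
    unfolding Pn_def by (rule finite_subset[OF _ finite_deg_le[of n]]) auto
  have "n * G n = (\<Sum>p\<in>Pn. \<Sum>j=1..n div deg p. deg p * G (n - j * deg p))"
    unfolding deg_times_Gcount_eq_sum_primes Pn_def
    by (intro sum.cong refl) (simp add: sum_count_factors sum_distrib_left)
  also have "\<dots> = (\<Sum>p\<in>Pn. \<Sum>k | k \<in> {1..n} \<and> deg p dvd k. deg p * G (n - k))"
    by (intro sum.cong refl sum_over_multiples[symmetric]) (simp add: Pn_def deg_prime_pos)
  also have "\<dots> = (\<Sum>k=1..n. \<Sum>p | p \<in> Pn \<and> deg p dvd k. deg p * G (n - k))"
    using fin by (intro sum.swap_restrict) auto
  also have "\<dots> = (\<Sum>k=1..n. Lambda k * G (n - k))"
  proof (intro sum.cong refl)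
    fix k assume "k \<in> {1..n}"
    then have "{p. p \<in> Pn \<and> deg p dvd k} = {p. p \<in> P \<and> deg p dvd k}"
      by (auto simp: Pn_def dest: dvd_imp_le)
    then show "(\<Sum>p | p \<in> Pn \<and> deg p dvd k. deg p * G (n - k)) = Lambda k * G (n - k)"
      by (simp add: Lambda_def sum_distrib_right)
  qed
  finally show ?thesis .
qed

lemma Lambda_le: "n > 0 \<Longrightarrow> Lambda n \<le> n * G n"
proof -
  assume "n > 0"
  then have "Lambda n * G (n - n) \<le> (\<Sum>k=1..n. Lambda k * G (n - k))"
    by (intro member_le_sum) auto
  then show ?thesis
    by (simp add: deg_times_Gcount Gcount_0)
qed

lemma moebius_eq:
  "moebius P g = (if \<exists>p. 2 \<le> count (factors g) p then 0 else (-1) ^ size (factors g))"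
proof -
  have "2 \<le> count (factors g) p \<Longrightarrow> p \<in> P" for p
    using set_factors_subset[of g] by (metis count_eq_zero_iff not_numeral_le_zero subsetD)
  then have "(\<exists>p. 2 \<le> count (factors g) p) \<longleftrightarrow> (\<exists>p\<in>P. p + p \<in> add_divisors g)"
    using count_factors_ge_iff[of _ 2 g] by (auto simp: numeral_2_eq_2)
  then show ?thesis
    unfolding moebius_def by (auto simp: add_divisors_def)
qed

lemma factors_sum_mset_set:
  "finite S \<Longrightarrow> S \<subseteq> P \<Longrightarrow> factors (sum_mset (mset_set S)) = mset_set S"
  by (intro factors_sum_mset) auto

lemma moebius_sum_mset_set:
  "finite S \<Longrightarrow> S \<subseteq> P \<Longrightarrow> moebius P (sum_mset (mset_set S)) = (-1) ^ card S"
  by (simp add: moebius_eq factors_sum_mset_set count_mset_set')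

lemma add_divisors_moebius_nonzero_eq:
  "{h \<in> add_divisors g. moebius P h \<noteq> 0} = (\<lambda>S. sum_mset (mset_set S)) ` Pow (set_mset (factors g))"
proof (intro equalityI subsetI)
  fix h assume h: "h \<in> {h \<in> add_divisors g. moebius P h \<noteq> 0}"
  then have "count (factors h) p \<le> 1" for p
    by (auto simp: moebius_eq not_le split: if_splits dest: spec[of _ p])
  then have "h = sum_mset (mset_set (set_mset (factors h)))"
    by (simp add: mset_set_set_mset_eq)
  moreover have "set_mset (factors h) \<subseteq> set_mset (factors g)"
    using h unfolding mem_add_divisors_iff by (auto dest: set_mset_mono)
  ultimately show "h \<in> (\<lambda>S. sum_mset (mset_set S)) ` Pow (set_mset (factors g))"
    by blast
next
  fix h assume "h \<in> (\<lambda>S. sum_mset (mset_set S)) ` Pow (set_mset (factors g))"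
  then obtain S where S: "S \<subseteq> set_mset (factors g)" "h = sum_mset (mset_set S)" by auto
  then have fin: "finite S" and SP: "S \<subseteq> P"
    using finite_subset set_factors_subset by blast+
  have "mset_set S \<subseteq># factors g"
    using S(1) fin by (intro mset_subset_eqI) (auto simp: count_mset_set')
  then show "h \<in> {h \<in> add_divisors g. moebius P h \<noteq> 0}"
    using S fin SP by (simp add: mem_add_divisors_iff factors_sum_mset_set moebius_sum_mset_set)
qed

lemma sum_moebius_add_divisors: "(\<Sum>h\<in>add_divisors g. moebius P h) = (if g = 0 then 1 else 0)"
proof -
  define X where "X = set_mset (factors g)"
  have fin: "finite X" and XP: "X \<subseteq> P"
    unfolding X_def using set_factors_subset by auto
  have inj: "inj_on (\<lambda>S. sum_mset (mset_set S)) (Pow X)"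
    using fin XP
    by (intro inj_onI) (metis PowD factors_sum_mset_set finite_set_mset_mset_set rev_finite_subset subset_trans)
  have "(\<Sum>h\<in>add_divisors g. moebius P h)
        = (\<Sum>h | h \<in> add_divisors g \<and> moebius P h \<noteq> 0. moebius P h)"
    using finite_add_divisors by (intro sum.mono_neutral_right) auto
  also have "\<dots> = (\<Sum>S\<in>Pow X. moebius P (sum_mset (mset_set S)))"
    unfolding add_divisors_moebius_nonzero_eq X_def[symmetric] by (simp add: sum.reindex[OF inj])
  also have "\<dots> = (\<Sum>S\<in>Pow X. (-1) ^ card S)"
    using fin XP by (intro sum.cong refl moebius_sum_mset_set) (auto intro: finite_subset)
  also have "\<dots> = (if g = 0 then 1 else 0)"
    using sum_Pow_minus_one_power_card[OF fin] unfolding X_def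
    by (metis set_mset_eq_empty_iff factors_zero sum_mset_factors sum_mset.empty)
  finally show ?thesis .
qed

definition moebius_sum :: "nat \<Rightarrow> int" where
  "moebius_sum n = (\<Sum>g | deg g = n. moebius P g)"

lemma moebius_sum_convolution: "(\<Sum>i\<le>n. moebius_sum i * int (G (n - i))) = (if n = 0 then 1 else 0)"
proof -
  have "(\<Sum>i\<le>n. moebius_sum i * int (G (n - i)))
        = (\<Sum>g | deg g = n. \<Sum>h\<in>add_divisors g. moebius P h)"
    unfolding moebius_sum_def by (simp add: sum_add_divisors_convolution)
  also have "\<dots> = (\<Sum>g | deg g = n. if g = 0 then 1 else 0)"
    by (simp add: sum_moebius_add_divisors)
  also have "\<dots> = (if n = 0 then 1 else 0)"
    using finite_deg_eq[of n] by (simp add: eq_commute[of 0])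
  finally show ?thesis .
qed

end

section \<open>Power series\<close>

lemma fps_conv_radius_ge_of_bound:
  fixes F :: "'a::{banach, real_normed_div_algebra} fps"
  assumes "b > 0" and "\<And>n. norm (fps_nth F n) \<le> K * b ^ n"
  shows "fps_conv_radius F \<ge> ereal (1 / b)"
  unfolding fps_conv_radius_def
proof (rule conv_radius_geI_ex')
  fix r :: real assume r: "0 < r" "ereal r < ereal (1 / b)"
  then have "b * r < 1"
    using assms(1) by (simp add: pos_less_divide_eq mult.commute)
  then have "summable (\<lambda>n. K * (b * r) ^ n)"
    using assms(1) r(1) by (intro summable_mult summable_geometric) simp
  moreover have "norm (fps_nth F n * of_real r ^ n) \<le> K * (b * r) ^ n" for n
    using mult_right_mono[OF assms(2)[of n], of "r ^ n"] r(1)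
    by (simp add: norm_mult norm_power power_mult_distrib mult.assoc)
  ultimately show "summable (\<lambda>n. fps_nth F n * of_real r ^ n)"
    by (rule summable_comparison_test')
qed

lemma fps_nth_bound_of_conv_radius:
  fixes F :: "'a::{banach, real_normed_div_algebra} fps"
  assumes "r > 0" and "ereal r < fps_conv_radius F"
  shows "\<exists>C. \<forall>n. norm (fps_nth F n) \<le> C / r ^ n"
proof -
  have "summable (\<lambda>n. norm (fps_nth F n * of_real r ^ n))"
    using assms by (intro norm_summable_fps) simp
  then have "(\<lambda>n. norm (fps_nth F n * of_real r ^ n)) \<longlonglongrightarrow> 0"
    by (rule summable_LIMSEQ_zero)
  then have "Bseq (\<lambda>n. norm (fps_nth F n * of_real r ^ n))"
    by (rule convergent_imp_Bseq[OF convergentI])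
  then obtain C where "\<forall>n. norm (fps_nth F n) * r ^ n \<le> C"
    using assms(1) by (auto elim!: BseqE simp: norm_mult norm_power)
  then show ?thesis
    using assms(1) by (auto simp: pos_le_divide_eq)
qed

lemma fps_nth_bound_powr_of_conv_radius:
  fixes F :: "'a::{banach, real_normed_div_algebra} fps"
  assumes "q > 1" and "ereal (1 / q) < fps_conv_radius F"
  shows "\<exists>\<eta>. 0 \<le> \<eta> \<and> \<eta> < 1 \<and> (\<exists>C. \<forall>n. norm (fps_nth F n) \<le> C * q powr (\<eta> * real n))"
proof -
  obtain r' where r': "1 / q < r'" "ereal r' < fps_conv_radius F"
    using ereal_dense2[OF assms(2)] by auto
  define r where "r = min 1 r'"
  have r: "1 / q < r" "r \<le> 1" "ereal r < fps_conv_radius F"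
    using r' assms(1) by (auto simp: r_def min_def intro: order.strict_trans1[of "ereal 1" "ereal r'"])
  have "r > 0"
    using r(1) assms(1) by (smt (verit) divide_pos_pos)
  obtain C where C: "\<forall>n. norm (fps_nth F n) \<le> C / r ^ n"
    using fps_nth_bound_of_conv_radius[OF \<open>r > 0\<close> r(3)] by blast
  define \<eta> where "\<eta> = - log q r"
  have "0 \<le> \<eta>"
    using r(2) \<open>r > 0\<close> assms(1) by (simp add: \<eta>_def)
  moreover have "\<eta> < 1"
    using log_less[OF assms(1) _ r(1)] assms(1) by (simp add: \<eta>_def log_divide)
  moreover have "C / r ^ n = C * q powr (\<eta> * real n)" for n
    using \<open>r > 0\<close> assms(1)
    by (simp add: \<eta>_def powr_powr[symmetric] powr_minus_divide powr_realpow divide_simps)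
  ultimately show ?thesis
    using C by metis
qed

lemma cball_subset_open_imp_larger_cball:
  fixes S :: "'a::{real_normed_vector, heine_borel} set"
  assumes "open S" and "cball 0 R \<subseteq> S" and "R \<ge> 0"
  obtains \<rho> where "\<rho> > R" and "cball 0 \<rho> \<subseteq> S"
proof -
  obtain e where e: "e > 0" "(\<Union>x\<in>cball 0 R. ball x e) \<subseteq> S"
    using compact_subset_open_imp_ball_epsilon_subset[OF compact_cball assms(1,2)] by blast
  define \<rho> where "\<rho> = R + e / 2"
  have \<rho>: "\<rho> > 0"
    using e(1) assms(3) by (simp add: \<rho>_def)
  have "y \<in> S" if "norm y \<le> \<rho>" for y
  proof -
    define x where "x = (R / \<rho>) *\<^sub>R y"
    have "norm x = R * (norm y / \<rho>)"
      unfolding x_def using assms(3) \<rho>(1) by simp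
    also have "\<dots> \<le> R * 1"
      using that assms(3) \<rho>(1) by (intro mult_left_mono) auto
    finally have "x \<in> cball 0 R" by simp
    have "1 - R / \<rho> = e / 2 / \<rho>"
      using \<rho>(1) by (simp add: \<rho>_def field_simps)
    then have "y - x = (e / 2 / \<rho>) *\<^sub>R y"
      by (metis x_def scaleR_diff_left scaleR_one)
    have "dist x y = norm (y - x)"
      by (metis dist_commute dist_norm)
    also have "\<dots> = e / 2 / \<rho> * norm y"
      using \<open>y - x = (e / 2 / \<rho>) *\<^sub>R y\<close> e(1) \<rho>(1) by simp
    also have "\<dots> \<le> e / 2 / \<rho> * \<rho>"
      using that e(1) \<rho>(1) by (intro mult_left_mono) auto
    finally have "y \<in> ball x e"
      using e(1) \<rho>(1) by simp
    with \<open>x \<in> cball 0 R\<close> e(2) show "y \<in> S" by blast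
  qed
  then show ?thesis
    using e(1) by (intro that[of \<rho>]) (auto simp: \<rho>_def)
qed

lemma eval_fps_eq_exp_eval_fps:
  fixes A L :: "complex fps"
  assumes deriv: "fps_deriv A = fps_deriv L * A" and "fps_nth A 0 = 1" and "fps_nth L 0 = 0"
    and rA: "ereal r \<le> fps_conv_radius A" and rL: "ereal r \<le> fps_conv_radius L"
    and "norm z < r"
  shows "eval_fps A z = exp (eval_fps L z)"
proof -
  define h where "h z = eval_fps A z * exp (- eval_fps L z)" for z
  have "\<exists>k. \<forall>x\<in>ball 0 r. h x = k"
  proof (rule has_field_derivative_zero_constant)
    fix x :: complex assume "x \<in> ball 0 r"
    then have A: "ereal (norm x) < fps_conv_radius A" and L: "ereal (norm x) < fps_conv_radius L"
      using rA rL by (auto intro: order.strict_trans2[of "ereal (norm x)" "ereal r"])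
    have L': "ereal (norm x) < fps_conv_radius (fps_deriv L)"
      using L fps_conv_radius_deriv[of L] by (rule order.strict_trans2)
    have "eval_fps (fps_deriv A) x = eval_fps (fps_deriv L) x * eval_fps A x"
      unfolding deriv by (rule eval_fps_mult[OF L' A])
    with A L show "(h has_field_derivative 0) (at x within ball 0 r)"
      unfolding h_def
      by (auto intro!: derivative_eq_intros has_field_derivative_eval_fps[OF A]
            has_field_derivative_eval_fps[OF L] simp: algebra_simps)
  qed simp
  then obtain k where k: "\<forall>x\<in>ball 0 r. h x = k" by blast
  have "0 \<in> ball 0 r" and "z \<in> ball 0 r"
    using assms(6) by (auto intro: le_less_trans[OF norm_ge_zero])
  moreover have "h 0 = 1"
    using assms(2,3) by (simp add: h_def eval_fps_at_0)
  ultimately have "h z = 1"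
    using k by metis
  then show ?thesis
    by (simp add: h_def exp_minus field_simps)
qed

lemma three_four_one_inequality:
  fixes u :: complex
  assumes "norm u = 1"
  shows "0 \<le> 3 + 4 * Re u + Re (u ^ 2)"
proof -
  have "Re u ^ 2 + Im u ^ 2 = 1"
    using assms by (simp add: cmod_def)
  then have "3 + 4 * Re u + Re (u ^ 2) = 2 * (1 + Re u) ^ 2"
    by (simp add: power2_eq_square algebra_simps)
  then show ?thesis by simp
qed

lemma Re_eval_fps_three_four_one:
  fixes L :: "complex fps"
  assumes real: "\<And>n. fps_nth L n \<in> \<real>" and nonneg: "\<And>n. Re (fps_nth L n) \<ge> 0"
    and r: "0 \<le> r" "ereal r < fps_conv_radius L" and w: "norm w = 1"
  shows "0 \<le> 3 * Re (eval_fps L (of_real r)) + 4 * Re (eval_fps L (of_real r * w))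
              + Re (eval_fps L (of_real r * w ^ 2))"
proof -
  have Re_sums: "(\<lambda>n. Re (fps_nth L n * z ^ n)) sums Re (eval_fps L z)" if "norm z = r" for z
    using sums_eval_fps[of z L] r that by (simp add: sums_complex_iff)
  have sums: "(\<lambda>n. 3 * Re (fps_nth L n * of_real r ^ n) + 4 * Re (fps_nth L n * (of_real r * w) ^ n)
                    + Re (fps_nth L n * (of_real r * w ^ 2) ^ n))
               sums (3 * Re (eval_fps L (of_real r)) + 4 * Re (eval_fps L (of_real r * w))
                     + Re (eval_fps L (of_real r * w ^ 2)))"
    using r w by (intro sums_add sums_mult Re_sums) (auto simp: norm_mult norm_power)
  have terms: "0 \<le> 3 * Re (fps_nth L n * of_real r ^ n) + 4 * Re (fps_nth L n * (of_real r * w) ^ n)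
                    + Re (fps_nth L n * (of_real r * w ^ 2) ^ n)" for n
  proof -
    define a where "a = Re (fps_nth L n)"
    have Re_term: "Re (fps_nth L n * (of_real r * u) ^ n) = a * r ^ n * Re (u ^ n)" for u
    proof -
      have "fps_nth L n * (of_real r * u) ^ n = of_real (a * r ^ n) * u ^ n"
        using real[of n] by (simp add: a_def of_real_Re power_mult_distrib)
      then show ?thesis by simp
    qed
    have "3 * Re (fps_nth L n * of_real r ^ n) + 4 * Re (fps_nth L n * (of_real r * w) ^ n)
            + Re (fps_nth L n * (of_real r * w ^ 2) ^ n)
          = a * r ^ n * (3 + 4 * Re (w ^ n) + Re ((w ^ n) ^ 2))"
      using Re_term[of 1] Re_term[of w] Re_term[of "w ^ 2"]
      by (simp add: algebra_simps flip: power_mult)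
    also have "\<dots> \<ge> 0"
      using nonneg[of n] r(1) w unfolding a_def
      by (intro mult_nonneg_nonneg three_four_one_inequality) (auto simp: norm_power)
    finally show ?thesis .
  qed
  show ?thesis
    using sums_le[OF _ sums_zero sums] terms by blast
qed

lemma holomorphic_on_factor_zero:
  fixes f :: "complex \<Rightarrow> complex"
  assumes "f holomorphic_on S" and "open S" and "f z0 = 0"
  obtains E where "E holomorphic_on S" and "\<And>z. f z = (z - z0) * E z"
proof
  show "(\<lambda>z. if z = z0 then deriv f z0 else (f z - f z0) / (z - z0)) holomorphic_on S"
    using assms(1,2) by (rule pole_lemma_open)
  show "f z = (z - z0) * (if z = z0 then deriv f z0 else (f z - f z0) / (z - z0))" for z
    using assms(3) by simp
qed

lemma tendsto_of_real_mult_at_left_1: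
  fixes g :: "'a::real_normed_algebra_1 \<Rightarrow> 'b::topological_space"
  assumes "continuous_on S g" and "open S" and "c \<in> S"
  shows "((\<lambda>t. g (of_real t * c)) \<longlongrightarrow> g c) (at_left 1)"
proof -
  have "isCont g c"
    using assms continuous_on_eq_continuous_at by blast
  moreover have "((\<lambda>t. of_real t * c) \<longlongrightarrow> of_real 1 * c) (at_left (1::real))"
    by (intro tendsto_intros)
  ultimately show ?thesis
    using isCont_tendsto_compose by fastforce
qed

lemma nonzero_on_circle_if_three_four_one:
  fixes f :: "complex \<Rightarrow> complex"
  assumes "R > 0" and holo: "f holomorphic_on S" and "open S" and "cball 0 R \<subseteq> S"
    and bound: "\<And>t w. 0 < t \<Longrightarrow> t < 1 \<Longrightarrow> norm w = 1 \<Longrightarrow>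
      (1 - t) ^ 3 * norm (1 - of_real t * w) ^ 4 * norm (1 - of_real t * w ^ 2)
      \<le> norm (f (of_real (t * R))) ^ 3 * norm (f (of_real (t * R) * w)) ^ 4
         * norm (f (of_real (t * R) * w ^ 2))"
    and w: "norm w = 1" "w \<noteq> 1" "w \<noteq> -1"
  shows "f (of_real R * w) \<noteq> 0"
proof
  define z0 where "z0 = of_real R * w"
  assume "f (of_real R * w) = 0"
  then obtain E where E: "E holomorphic_on S" and f_eq: "\<And>z. f z = (z - z0) * E z"
    using holomorphic_on_factor_zero[OF holo \<open>open S\<close>, of z0] by (auto simp: z0_def)
  have S: "of_real R \<in> S" "z0 \<in> S" "of_real R * w ^ 2 \<in> S"
    using assms(1,4) w(1) by (auto simp: z0_def norm_mult norm_power)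
  define X where "X t = norm (1 - of_real t * w) ^ 4 * norm (1 - of_real t * w ^ 2)" for t
  define Y where "Y t = (1 - t) * (R ^ 4 * norm (f (of_real t * of_real R)) ^ 3
    * norm (E (of_real t * z0)) ^ 4 * norm (f (of_real t * (of_real R * w ^ 2))))" for t
  \<comment> \<open>The zero at z0 makes the right-hand side of the bound vanish to fourth order as t \<rightarrow> 1,
    while the left-hand side vanishes only to third order.\<close>
  have "eventually (\<lambda>t. X t \<le> Y t) (at_left 1)"
    using eventually_at_left_real[of 0 1, OF zero_less_one]
  proof eventually_elim
    case (elim t)
    then have t: "0 < t" "t < 1" by auto
    have "norm (of_real t - 1 :: complex) = 1 - t"
      using t by (metis abs_of_neg diff_less_0_iff_less minus_diff_eq norm_of_real of_real_1 of_real_diff)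
    moreover have "of_real t * z0 - z0 = (of_real t - 1) * z0"
      by (simp add: algebra_simps)
    ultimately have norm_f: "norm (f (of_real t * z0)) = (1 - t) * R * norm (E (of_real t * z0))"
      using assms(1) w(1) by (simp add: f_eq norm_mult z0_def)
    have "(1 - t) ^ 3 * X t \<le> norm (f (of_real t * of_real R)) ^ 3
        * norm (f (of_real t * z0)) ^ 4 * norm (f (of_real t * (of_real R * w ^ 2)))"
      using bound[OF t w(1)] by (simp add: X_def z0_def mult.assoc)
    also have "\<dots> = (1 - t) ^ 3 * Y t"
      unfolding Y_def norm_f by algebra
    finally show "X t \<le> Y t"
      using t by simp
  qed
  moreover have "(X \<longlongrightarrow> X 1) (at_left 1)"
    unfolding X_def by (intro tendsto_intros)
  moreover have "(Y \<longlongrightarrow> (1 - 1) * (R ^ 4 * norm (f (of_real R)) ^ 3 * norm (E z0) ^ 4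
                     * norm (f (of_real R * w ^ 2)))) (at_left 1)"
    unfolding Y_def using S holo E \<open>open S\<close>
    by (intro tendsto_intros tendsto_of_real_mult_at_left_1 holomorphic_on_imp_continuous_on)
  ultimately have "X 1 \<le> 0"
    using tendsto_le[OF trivial_limit_at_left_real] by simp
  moreover have "w ^ 2 \<noteq> 1"
    using w by (simp add: power2_eq_1_iff)
  then have "X 1 > 0"
    using w(2) by (simp add: X_def)
  ultimately show False by simp
qed

section \<open>The generating functions\<close>

locale arith_semigroup_zeta = additive_arithmetical_semigroup P deg
  for P :: "'a::comm_monoid_add set" and deg :: "'a \<Rightarrow> nat" +
  fixes c q \<eta>0 :: real and Z :: "complex \<Rightarrow> complex"
  assumes c_pos: "c > 0" and q_gt_1: "q > 1" and \<eta>0_lt_1: "\<eta>0 < 1"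
    and axiom_A: "axiom_A_sharp deg c q \<eta>0"
    and Z_holomorphic: "Z holomorphic_on (ball 0 (q powr (-\<eta>0)) - {complex_of_real (1 / q)})"
    and Z_eq_series: "\<forall>z\<in>ball 0 (1 / q). Z z = (\<Sum>n. of_nat (Gcount deg n) * z ^ n)"
    and Z_minus_nonzero: "Z (complex_of_real (- 1 / q)) \<noteq> 0"
begin

abbreviation R1 :: real where
  "R1 \<equiv> q powr (-\<eta>0)"

lemma inverse_q_less_R1: "1 / q < R1"
proof -
  have "q powr (-1) < q powr (-\<eta>0)"
    using q_gt_1 \<eta>0_lt_1 by (intro powr_less_mono) auto
  then show ?thesis
    using q_gt_1 by (simp add: powr_minus_divide)
qed

definition Z_fps :: "complex fps" where
  "Z_fps = Abs_fps (\<lambda>n. of_nat (G n))"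

definition L_fps :: "complex fps" where
  "L_fps = Abs_fps (\<lambda>n. of_real (Lambda n / n))" \<comment> \<open>constant term 0, as x / 0 = 0\<close>

definition H_fps :: "complex fps" where
  "H_fps = Abs_fps (\<lambda>n. of_real (G n - c * q ^ n))"

abbreviation Q_fps :: "complex fps" where
  "Q_fps \<equiv> 1 - fps_const (of_real q) * fps_X"

text \<open>
  D_fps is (1 - qX) Z_fps (lemma Q_fps_times_Z_fps); written via H_fps, Axiom A# shows that
  it converges on a disc of radius q^-\<eta>0 > 1/q.
\<close>
definition D_fps :: "complex fps" where
  "D_fps = fps_const (of_real c) + Q_fps * H_fps"

definition M_fps :: "complex fps" where
  "M_fps = Abs_fps (\<lambda>n. of_int (moebius_sum n))"

abbreviation D :: "complex \<Rightarrow> complex" where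
  "D \<equiv> eval_fps D_fps"

lemma Gcount_le_exp: "\<exists>K. \<forall>n. real (G n) \<le> K * q ^ n"
proof -
  obtain C where C: "\<And>n. \<bar>real (G n) - c * q ^ n\<bar> \<le> C * q powr (\<eta>0 * n)"
    using axiom_A unfolding axiom_A_sharp_def by blast
  have "real (G n) \<le> (c + \<bar>C\<bar>) * q ^ n" for n
  proof -
    have "q powr (\<eta>0 * n) \<le> q powr n"
      using q_gt_1 \<eta>0_lt_1 mult_right_mono[of \<eta>0 1 "real n"] by (intro powr_mono) auto
    then have "C * q powr (\<eta>0 * n) \<le> \<bar>C\<bar> * q ^ n"
      using q_gt_1 by (smt (verit) mult_left_mono powr_realpow powr_ge_zero abs_ge_self mult_right_mono)
    then show ?thesis
      using C[of n] by (simp add: algebra_simps)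
  qed
  then show ?thesis by blast
qed

lemma conv_radius_Z_fps: "fps_conv_radius Z_fps \<ge> 1 / q"
  and conv_radius_L_fps: "fps_conv_radius L_fps \<ge> 1 / q"
proof -
  obtain K where K: "\<And>n. real (G n) \<le> K * q ^ n"
    using Gcount_le_exp by blast
  show "fps_conv_radius Z_fps \<ge> 1 / q"
    unfolding Z_fps_def using q_gt_1 K by (intro fps_conv_radius_ge_of_bound) auto
  have "norm (fps_nth L_fps n) \<le> K * q ^ n" for n
  proof -
    have "Lambda n / n \<le> real (G n)"
      using Lambda_le[of n] by (cases "n = 0") (auto simp: divide_le_eq mult.commute simp flip: of_nat_mult)
    then show ?thesis
      unfolding L_fps_def fps_nth_Abs_fps norm_of_real using K[of n] by simp
  qed
  then show "fps_conv_radius L_fps \<ge> 1 / q"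
    using q_gt_1 by (intro fps_conv_radius_ge_of_bound) auto
qed

lemma conv_radius_H_fps: "fps_conv_radius H_fps \<ge> R1"
proof -
  obtain C where C: "\<And>n. \<bar>real (G n) - c * q ^ n\<bar> \<le> C * q powr (\<eta>0 * n)"
    using axiom_A unfolding axiom_A_sharp_def by blast
  have "norm (fps_nth H_fps n) \<le> C * (q powr \<eta>0) ^ n" for n
  proof -
    have "q powr (\<eta>0 * n) = (q powr \<eta>0) ^ n"
      using q_gt_1 by (simp add: powr_powr[symmetric] powr_realpow mult.commute)
    then show ?thesis
      unfolding H_fps_def fps_nth_Abs_fps norm_of_real using C[of n] by simp
  qed
  then have "fps_conv_radius H_fps \<ge> 1 / q powr \<eta>0"
    using q_gt_1 by (intro fps_conv_radius_ge_of_bound) auto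
  then show ?thesis
    using q_gt_1 by (simp add: powr_minus_divide)
qed

lemma conv_radius_Q_fps: "fps_conv_radius Q_fps = \<infinity>"
proof -
  have "fps_conv_radius (fps_const (of_real q) * fps_X :: complex fps) = \<infinity>"
    using q_gt_1 by (simp add: fps_conv_radius_cmult_left)
  then show ?thesis
    using fps_conv_radius_diff[of 1 "fps_const (of_real q) * fps_X :: complex fps"] by simp
qed

lemma eval_Q_fps: "eval_fps Q_fps z = 1 - of_real q * z"
  using conv_radius_Q_fps q_gt_1
  by (subst eval_fps_diff) (auto simp: eval_fps_mult fps_conv_radius_cmult_left)

lemma conv_radius_D_fps: "fps_conv_radius D_fps \<ge> R1"
proof -
  have "R1 \<le> fps_conv_radius (Q_fps * H_fps)"
    using fps_conv_radius_mult[of Q_fps H_fps] conv_radius_Q_fps conv_radius_H_fps by simp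
  then show ?thesis
    unfolding D_fps_def using fps_conv_radius_add[of "fps_const (of_real c)" "Q_fps * H_fps"] by simp
qed

lemma Q_fps_times_Z_fps: "Q_fps * Z_fps = D_fps"
proof -
  have "Z_fps = Abs_fps (\<lambda>n. of_real (c * q ^ n)) + H_fps"
    by (rule fps_ext) (simp add: Z_fps_def H_fps_def)
  moreover have "Q_fps * Abs_fps (\<lambda>n. of_real (c * q ^ n)) = fps_const (of_real c)"
  proof (rule fps_ext)
    fix n
    show "fps_nth (Q_fps * Abs_fps (\<lambda>n. of_real (c * q ^ n))) n = fps_nth (fps_const (of_real c)) n"
      by (cases n) (simp_all add: algebra_simps)
  qed
  ultimately show ?thesis
    by (simp add: D_fps_def distrib_left)
qed

lemma fps_deriv_Z_fps: "fps_deriv Z_fps = fps_deriv L_fps * Z_fps"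
proof (rule fps_ext)
  fix n
  have "fps_nth (fps_deriv L_fps * Z_fps) n = (\<Sum>i=0..n. of_nat (Lambda (Suc i) * G (n - i)))"
    by (simp add: fps_mult_nth L_fps_def Z_fps_def fps_deriv_def flip: of_nat_Suc)
  also have "\<dots> = of_nat (\<Sum>k=1..Suc n. Lambda k * G (Suc n - k))"
    unfolding One_nat_def sum.shift_bounds_cl_Suc_ivl by simp
  also have "\<dots> = fps_nth (fps_deriv Z_fps) n"
    by (simp only: deg_times_Gcount[symmetric]) (simp add: Z_fps_def fps_deriv_def algebra_simps)
  finally show "fps_nth (fps_deriv Z_fps) n = fps_nth (fps_deriv L_fps * Z_fps) n" ..
qed

lemma M_fps_times_Z_fps: "M_fps * Z_fps = 1"
proof (rule fps_ext)
  fix n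
  have "fps_nth (M_fps * Z_fps) n = of_int (\<Sum>i\<le>n. moebius_sum i * int (G (n - i)))"
    by (simp add: fps_mult_nth M_fps_def Z_fps_def atLeast0AtMost)
  then show "fps_nth (M_fps * Z_fps) n = fps_nth 1 n"
    by (simp add: moebius_sum_convolution)
qed

lemma M_fps_eq: "M_fps = Q_fps / D_fps"
proof -
  have D0: "fps_nth D_fps 0 \<noteq> 0"
    by (simp add: Q_fps_times_Z_fps[symmetric] Z_fps_def Gcount_0)
  have "M_fps * D_fps = Q_fps"
    by (simp add: Q_fps_times_Z_fps[symmetric] mult.left_commute M_fps_times_Z_fps)
  then have "M_fps = Q_fps * inverse D_fps"
    using inverse_mult_eq_1'[OF D0] by (metis mult.assoc mult.right_neutral)
  then show ?thesis
    by (simp add: fps_divide_unit[OF D0])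
qed

lemma D_holomorphic: "D holomorphic_on ball 0 R1"
proof (intro holomorphic_on_eval_fps subsetI)
  fix z :: complex assume "z \<in> ball 0 R1"
  then show "z \<in> eball 0 (fps_conv_radius D_fps)"
    using less_le_trans[OF _ conv_radius_D_fps, of "ereal (norm z)"] by simp
qed

lemma D_eq_eval_Z_fps:
  assumes "norm z < 1 / q"
  shows "D z = (1 - of_real q * z) * eval_fps Z_fps z"
proof -
  have "ereal (norm z) < fps_conv_radius Z_fps"
    using assms by (intro less_le_trans[OF _ conv_radius_Z_fps]) simp
  then show ?thesis
    unfolding Q_fps_times_Z_fps[symmetric] using conv_radius_Q_fps by (simp add: eval_fps_mult eval_Q_fps)
qed

lemma D_eq_exp:
  assumes "norm z < 1 / q"
  shows "D z = (1 - of_real q * z) * exp (eval_fps L_fps z)"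
  using eval_fps_eq_exp_eval_fps[OF fps_deriv_Z_fps _ _ conv_radius_Z_fps conv_radius_L_fps assms]
    D_eq_eval_Z_fps[OF assms]
  by (simp add: Z_fps_def L_fps_def Gcount_0)

lemma D_inverse_q: "D (of_real (1 / q)) = of_real c"
proof -
  have "ereal (norm (of_real (1 / q) :: complex)) < fps_conv_radius H_fps"
    using inverse_q_less_R1 q_gt_1 by (intro less_le_trans[OF _ conv_radius_H_fps]) (simp add: norm_divide)
  moreover have "ereal (norm (of_real (1 / q) :: complex)) < fps_conv_radius (Q_fps * H_fps)"
    using calculation fps_conv_radius_mult[of Q_fps H_fps] conv_radius_Q_fps by auto
  ultimately show ?thesis
    using conv_radius_Q_fps q_gt_1 by (simp add: D_fps_def eval_fps_add eval_fps_mult eval_Q_fps)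
qed

lemma D_eq_Z:
  assumes "z \<in> ball 0 R1" and "z \<noteq> of_real (1 / q)"
  shows "D z = (1 - of_real q * z) * Z z"
proof -
  have nz: "1 - of_real q * u \<noteq> 0" if "u \<noteq> of_real (1 / q)" for u :: complex
    using that q_gt_1 by (auto simp: field_simps)
  have "Z z = D z / (1 - of_real q * z)"
  proof (rule analytic_continuation_open[where s = "ball 0 (1 / q)" and s' = "ball 0 R1 - {of_real (1 / q)}"
      and f = Z and g = "\<lambda>z. D z / (1 - of_real q * z)"])
    show "connected (ball (0::complex) R1 - {of_real (1 / q)})"
      by (rule connected_punctured_convex) (use inverse_q_less_R1 q_gt_1 in \<open>auto simp: aff_dim_open\<close>)
    show "ball (0::complex) (1 / q) \<subseteq> ball 0 R1 - {of_real (1 / q)}"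
      using inverse_q_less_R1 q_gt_1 by (auto simp: norm_divide)
    show "(\<lambda>z. D z / (1 - of_real q * z)) holomorphic_on ball 0 R1 - {of_real (1 / q)}"
      using nz by (intro holomorphic_intros holomorphic_on_subset[OF D_holomorphic]) auto
    show "Z u = D u / (1 - of_real q * u)" if "u \<in> ball 0 (1 / q)" for u
    proof -
      have u: "norm u < 1 / q"
        using that by simp
      then have "1 - of_real q * u \<noteq> 0"
        using q_gt_1 by (intro nz) (auto simp: norm_divide)
      then show ?thesis
        using Z_eq_series u D_eq_eval_Z_fps[OF u] by (simp add: eval_fps_def Z_fps_def)
    qed
  qed (use Z_holomorphic assms q_gt_1 in auto)
  then show ?thesis
    using nz[OF assms(2)] by simp
qed

lemma norm_D_eq_exp:
  "norm z < 1 / q \<Longrightarrow> norm (D z) = norm (1 - of_real q * z) * exp (Re (eval_fps L_fps z))"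
  by (simp add: D_eq_exp norm_mult)

lemma D_three_four_one:
  assumes t: "0 < t" "t < 1" and w: "norm w = 1"
  shows "(1 - t) ^ 3 * norm (1 - of_real t * w) ^ 4 * norm (1 - of_real t * w ^ 2)
         \<le> norm (D (of_real (t * (1 / q)))) ^ 3 * norm (D (of_real (t * (1 / q)) * w)) ^ 4
            * norm (D (of_real (t * (1 / q)) * w ^ 2))"
proof -
  define r where "r = t * (1 / q)"
  have r: "0 \<le> r" "r < 1 / q"
    using t q_gt_1 by (auto simp: r_def divide_strict_right_mono)
  define E where "E u = exp (Re (eval_fps L_fps (of_real r * u)))" for u
  have norm_D: "norm (D (of_real r * u)) = norm (1 - of_real t * u) * E u" if "norm u = 1" for u
  proof -
    have "of_real q * (of_real r * u) = of_real t * u"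
      using q_gt_1 by (simp add: r_def)
    moreover have "norm (of_real r * u) < 1 / q"
      using r that by (simp add: norm_mult)
    ultimately show ?thesis
      unfolding E_def by (metis norm_D_eq_exp)
  qed
  have "ereal r < fps_conv_radius L_fps"
    using r by (intro less_le_trans[OF _ conv_radius_L_fps]) simp
  then have "0 \<le> 3 * Re (eval_fps L_fps (of_real r)) + 4 * Re (eval_fps L_fps (of_real r * w))
                + Re (eval_fps L_fps (of_real r * w ^ 2))"
    using r w by (intro Re_eval_fps_three_four_one) (auto simp: L_fps_def)
  then have "1 \<le> exp (3 * Re (eval_fps L_fps (of_real r)) + 4 * Re (eval_fps L_fps (of_real r * w))
                + Re (eval_fps L_fps (of_real r * w ^ 2)))"
    by simp
  also have "\<dots> = E 1 ^ 3 * E w ^ 4 * E (w ^ 2)"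
    by (simp add: E_def exp_add exp_of_nat_mult[symmetric])
  finally have "1 \<le> E 1 ^ 3 * E w ^ 4 * E (w ^ 2)" .
  then have "(1 - t) ^ 3 * norm (1 - of_real t * w) ^ 4 * norm (1 - of_real t * w ^ 2) * 1
      \<le> (1 - t) ^ 3 * norm (1 - of_real t * w) ^ 4 * norm (1 - of_real t * w ^ 2)
         * (E 1 ^ 3 * E w ^ 4 * E (w ^ 2))"
    using t by (intro mult_left_mono) auto
  also have "\<dots> = norm (D (of_real r * 1)) ^ 3 * norm (D (of_real r * w)) ^ 4 * norm (D (of_real r * w ^ 2))"
  proof -
    have "norm (1 - of_real t * 1 :: complex) = 1 - t"
      using t by (metis abs_of_pos diff_gt_0_iff_gt mult.right_neutral norm_of_real of_real_1 of_real_diff)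
    moreover have "norm (w ^ 2) = 1"
      using w by (simp add: norm_power)
    ultimately show ?thesis
      unfolding norm_D[OF norm_one] norm_D[OF w] norm_D[OF \<open>norm (w ^ 2) = 1\<close>]
      by (simp add: power_mult_distrib mult_ac)
  qed
  finally show ?thesis
    by (simp add: r_def)
qed

lemma D_nonzero_on_circle:
  assumes w: "norm w = 1"
  shows "D (of_real (1 / q) * w) \<noteq> 0"
proof -
  consider "w = 1" | "w = -1" | "w \<noteq> 1" "w \<noteq> -1" by blast
  then show ?thesis
  proof cases
    case 1
    then show ?thesis
      using D_inverse_q c_pos by simp
  next
    case 2
    have "of_real (- 1 / q) \<in> ball (0::complex) R1"
      using inverse_q_less_R1 q_gt_1 by (simp add: norm_divide)
    moreover have "of_real (- 1 / q) \<noteq> (of_real (1 / q) :: complex)"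
      using q_gt_1 by simp
    ultimately show ?thesis
      using 2 D_eq_Z[of "of_real (- 1 / q)"] Z_minus_nonzero q_gt_1 by simp
  next
    case 3
    have "cball 0 (1 / q) \<subseteq> ball (0::complex) R1"
      using inverse_q_less_R1 by auto
    then show ?thesis
      using q_gt_1 w 3 D_three_four_one
      by (intro nonzero_on_circle_if_three_four_one[OF _ D_holomorphic]) auto
  qed
qed

lemma D_nonzero:
  assumes "norm z \<le> 1 / q"
  shows "D z \<noteq> 0"
proof (cases "norm z < 1 / q")
  case True
  then have "norm (of_real q * z) < 1"
    using q_gt_1 by (simp add: norm_mult field_simps)
  then have "1 - of_real q * z \<noteq> 0"
    by auto
  then show ?thesis
    using D_eq_exp[OF True] by simp
next
  case False
  then have "norm (of_real q * z) = 1"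
    using assms q_gt_1 by (simp add: norm_mult field_simps)
  moreover have "z = of_real (1 / q) * (of_real q * z)"
    using q_gt_1 by simp
  ultimately show ?thesis
    using D_nonzero_on_circle by metis
qed

lemma zero_free_disc: "\<exists>\<rho> > 1 / q. \<forall>z. norm z \<le> \<rho> \<longrightarrow> D z \<noteq> 0"
proof -
  define S where "S = ball 0 R1 \<inter> D -` (- {0})"
  have "open S"
    unfolding S_def using D_holomorphic
    by (intro continuous_open_preimage holomorphic_on_imp_continuous_on) auto
  moreover have "cball 0 (1 / q) \<subseteq> S"
    unfolding S_def using D_nonzero inverse_q_less_R1 by auto
  ultimately obtain \<rho> where "\<rho> > 1 / q" "cball 0 \<rho> \<subseteq> S"
    using q_gt_1 by (elim cball_subset_open_imp_larger_cball) auto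
  then show ?thesis
    by (auto simp: S_def subset_iff)
qed

lemma conv_radius_M_fps: "ereal (1 / q) < fps_conv_radius M_fps"
proof -
  obtain \<rho> where \<rho>: "\<rho> > 1 / q" "\<forall>z. norm z \<le> \<rho> \<longrightarrow> D z \<noteq> 0"
    using zero_free_disc by blast
  have "\<rho> > 0"
    using less_trans[OF _ \<rho>(1), of 0] q_gt_1 by simp
  have "Min {ereal \<rho>, fps_conv_radius Q_fps, fps_conv_radius D_fps} \<le> fps_conv_radius (Q_fps / D_fps)"
    by (rule fps_conv_radius_divide')
       (use \<open>\<rho> > 0\<close> \<rho>(2) conv_radius_Q_fps less_le_trans[OF _ conv_radius_D_fps, of 0] q_gt_1 in auto)
  moreover have "ereal (1 / q) < Min {ereal \<rho>, fps_conv_radius Q_fps, fps_conv_radius D_fps}"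
    using \<rho>(1) conv_radius_Q_fps inverse_q_less_R1 by (simp add: less_le_trans[OF _ conv_radius_D_fps])
  ultimately show ?thesis
    unfolding M_fps_eq by (rule order.strict_trans2[rotated])
qed

end

theorem lemma2p4:
  fixes P :: "'a::comm_monoid_add set" and deg :: "'a \<Rightarrow> nat"
    and c q \<eta>0 :: real and Z :: "complex \<Rightarrow> complex"
  assumes "arith_semigroup P deg"
    and "c > 0" and "q > 1" and "0 \<le> \<eta>0" and "\<eta>0 < 1"
    and "axiom_A_sharp deg c q \<eta>0"
    and "Z holomorphic_on (ball 0 (q powr (-\<eta>0)) - {complex_of_real (1 / q)})"
    and "\<forall>z\<in>ball 0 (1 / q). Z z = (\<Sum>n. of_nat (Gcount deg n) * z ^ n)"
    and "Z (complex_of_real (- 1 / q)) \<noteq> 0"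
  shows "\<exists>\<eta>::real. 0 \<le> \<eta> \<and> \<eta> < 1 \<and>
           (\<exists>C. \<forall>n. \<bar>real_of_int (\<Sum>g\<in>{g. deg g = n}. moebius P g)\<bar> \<le> C * q powr (\<eta> * real n))"
proof -
  interpret arith_semigroup_zeta P deg c q \<eta>0 Z
    using assms by unfold_locales auto
  have "norm (fps_nth M_fps n) = \<bar>real_of_int (\<Sum>g\<in>{g. deg g = n}. moebius P g)\<bar>" for n
    by (simp only: M_fps_def moebius_sum_def fps_nth_Abs_fps norm_of_int)
  then show ?thesis
    using fps_nth_bound_powr_of_conv_radius[OF \<open>q > 1\<close> conv_radius_M_fps] by simp
qed

end
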